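(* For every $k\in\mathbb{N}$ there exists a nondeterministic parity automaton $\mathcal{A}$ with $O(k)$ states such that, for every bound $n\ge|\mathcal{A}|$ (the number of states of $\mathcal{A}$), every deterministic parity automaton $\mathcal{A}'$ with $L(\mathcal{A}')\subseteq L(\mathcal{A})$ and $L_n(L(\mathcal{A}'))=L_n(L(\mathcal{A}))$ has at least $2^k$ states.
   Context: A lasso of length $n$ over a finite alphabet $\Sigma$ is a pair $(u,v)$ with $u\in\Sigma^*$, $v\in\Sigma^+$, $|u\cdot v|=n$, inducing $u\cdot v^\omega$. For $\psi\subseteq\Sigma^\omega$, $L_n(\psi)=\{u\cdot v^\omega \in \psi \mid u\in\Sigma^*, v\in\Sigma^+, |u\cdot v|=n\}$. A nondeterministic parity automaton is $(Q,Q_0,\delta,\mu)$ with finite $Q$, $Q_0\subseteq Q$, $\delta:Q\times\Sigma\to\mathcal{P}(Q)$, coloring $\mu:Q\to C$, $C\subset\mathbb{N}$ finite. A run on $\alpha_1\alpha_2\cdots$ is $q_0q_1\cdots$ with $q_0\in Q_0$ and $q_{i+1}\in\delta(q_i,\alpha_{i+1})$; it is accepting if the highest color occurring infinitely often along it is even; $L(\cdot)$ is the set of words with an accepting run. Deterministic means $|Q_0|=1$ and $|\delta(q,\alpha)|\le1$ for all $q,\alpha$ (missing successors allowed). *)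

theory Defs
  imports Main "HOL-Library.Omega_Words_Fun"
begin

record ('q, 'a) pa =
  states :: "'q set"
  init   :: "'q set"
  trans  :: "'q \<Rightarrow> 'a \<Rightarrow> 'q set"
  col    :: "'q \<Rightarrow> nat"

definition wf_pa :: "'a set \<Rightarrow> ('q, 'a) pa \<Rightarrow> bool" where
  "wf_pa \<Sigma> A \<longleftrightarrow> finite (states A) \<and> init A \<subseteq> states A \<and>
     (\<forall>q\<in>states A. \<forall>a\<in>\<Sigma>. trans A q a \<subseteq> states A)"

definition deterministic :: "'a set \<Rightarrow> ('q, 'a) pa \<Rightarrow> bool" where
  "deterministic \<Sigma> A \<longleftrightarrow> card (init A) = 1 \<and>
     (\<forall>q\<in>states A. \<forall>a\<in>\<Sigma>. card (trans A q a) \<le> 1)"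

definition is_run :: "('q, 'a) pa \<Rightarrow> 'a word \<Rightarrow> 'q word \<Rightarrow> bool" where
  "is_run A w r \<longleftrightarrow> r 0 \<in> init A \<and> (\<forall>i. r (Suc i) \<in> trans A (r i) (w i))"

definition accepting :: "('q, 'a) pa \<Rightarrow> 'q word \<Rightarrow> bool" where
  "accepting A r \<longleftrightarrow> even (Max {c. \<exists>\<^sub>\<infinity> i. col A (r i) = c})"

definition lang :: "'a set \<Rightarrow> ('q, 'a) pa \<Rightarrow> 'a word set" where
  "lang \<Sigma> A = {w. (\<forall>i. w i \<in> \<Sigma>) \<and> (\<exists>r. is_run A w r \<and> accepting A r)}"

definition lasso_lang :: "'a set \<Rightarrow> nat \<Rightarrow> 'a word set \<Rightarrow> 'a word set" where
  "lasso_lang \<Sigma> n \<psi> = {w \<in> \<psi>. \<exists>u v. set u \<subseteq> \<Sigma> \<and> set v \<subseteq> \<Sigma> \<and> v \<noteq> [] \<and>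
      length u + length v = n \<and> w = u \<frown> v\<^sup>\<omega>}"

end

theory Submission
  imports Defs
begin

text \<open>The automaton guesses a position carrying the letter 1 and checks that the letter k
  positions later is 2. For every xs in {0,1}^k the word xs 1 0^(k-1) 2 0^omega is accepted and
  is induced by a lasso of every length n \<ge> 2k+2, so every deterministic A' agreeing with A on
  lassos of length n accepts it as well. If xs and ys differ at position j, say with a 1 in xs, the continuation
  0^j 2 0^omega is accepted after xs (again a short lasso) but rejected after ys. Since the state
  of a deterministic automaton after a prefix determines which continuations are accepted, the
  2^k words xs lead to pairwise distinct states of A'.\<close>

lemma accepting_iff_limit: "accepting A r \<longleftrightarrow> even (Max (limit (col A \<circ> r)))"
  by (simp add: accepting_def limit_def)

lemma accepting_suffix_cong:
  assumes "suffix m r1 = suffix m r2"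
  shows "accepting A r1 = accepting A r2"
proof -
  have lim: "limit (col A \<circ> r) = limit (col A \<circ> suffix m r)" for r
  proof -
    have "col A \<circ> suffix m r = suffix m (col A \<circ> r)"
      by (simp add: suffix_def comp_def)
    then show ?thesis by simp
  qed
  have "limit (col A \<circ> r1) = limit (col A \<circ> suffix m r2)"
    using lim[of r1] assms by simp
  also have "\<dots> = limit (col A \<circ> r2)"
    using lim[of r2] by simp
  finally show ?thesis
    by (simp add: accepting_iff_limit)
qed

lemma run_in_states:
  assumes "wf_pa \<Sigma> A" "\<forall>i. w i \<in> \<Sigma>" "is_run A w r"
  shows "r t \<in> states A"
proof (induction t)
  case 0
  then show ?case using assms by (auto simp: wf_pa_def is_run_def)
next
  case (Suc t)
  then show ?case using assms unfolding wf_pa_def is_run_def by blast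
qed

lemma deterministic_states_nonempty:
  assumes "wf_pa \<Sigma> A" "deterministic \<Sigma> A"
  shows "0 < card (states A)"
proof -
  obtain q where "init A = {q}"
    using assms(2) by (auto simp: deterministic_def card_1_singleton_iff)
  then show ?thesis
    using assms(1) by (auto simp: wf_pa_def card_gt_0_iff)
qed

lemma deterministic_runs_agree:
  assumes wf: "wf_pa \<Sigma> A" and det: "deterministic \<Sigma> A"
    and w1: "\<forall>i. w1 i \<in> \<Sigma>" and r1: "is_run A w1 r1" and r2: "is_run A w2 r2"
    and agree: "\<forall>i<m. w1 i = w2 i" and "t \<le> m"
  shows "r1 t = r2 t"
  using \<open>t \<le> m\<close>
proof (induction t)
  case 0
  have "card (init A) = 1" using det by (simp add: deterministic_def)
  then show ?case
    using r1 r2 by (auto simp: is_run_def card_1_singleton_iff)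
next
  case (Suc t)
  let ?succ = "trans A (r1 t) (w1 t)"
  have q: "r1 t \<in> states A" and a: "w1 t \<in> \<Sigma>"
    using run_in_states[OF wf w1 r1] w1 by auto
  have "finite ?succ" "card ?succ \<le> 1"
    using wf det q a unfolding wf_pa_def deterministic_def by (meson finite_subset)+
  moreover have "r1 t = r2 t" "w1 t = w2 t"
    using Suc agree by auto
  moreover have "r1 (Suc t) \<in> ?succ" "r2 (Suc t) \<in> trans A (r2 t) (w2 t)"
    using r1 r2 by (simp_all add: is_run_def)
  ultimately show ?case by (auto simp: card_le_Suc0_iff_eq)
qed

lemma splice_in_lang:
  assumes r1: "is_run A w1 r1" "accepting A r1" "\<forall>i. w1 i \<in> \<Sigma>"
    and r2: "is_run A w2 r2" "\<forall>i<m. w2 i \<in> \<Sigma>"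
    and meet: "r1 m = r2 m"
  shows "(\<lambda>t. if t < m then w2 t else w1 t) \<in> lang \<Sigma> A"
proof -
  define r where "r t = (if t \<le> m then r2 t else r1 t)" for t
  have step: "r (Suc t) \<in> trans A (r t) (if t < m then w2 t else w1 t)" for t
  proof -
    have run1: "r1 (Suc t) \<in> trans A (r1 t) (w1 t)" and run2: "r2 (Suc t) \<in> trans A (r2 t) (w2 t)"
      using r1(1) r2(1) by (simp_all add: is_run_def)
    consider "t < m" | "t = m" | "m < t" by linarith
    then show ?thesis
    proof cases
      case 1
      then show ?thesis using run2 by (simp add: r_def)
    next
      case 2
      then show ?thesis using run1 meet by (simp add: r_def)
    next
      case 3
      then show ?thesis using run1 by (simp add: r_def)
    qed
  qed
  have "is_run A (\<lambda>t. if t < m then w2 t else w1 t) r"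
    using r2(1) step by (simp add: is_run_def r_def)
  moreover have "suffix (Suc m) r = suffix (Suc m) r1"
    by (simp add: suffix_def r_def)
  then have "accepting A r"
    using accepting_suffix_cong r1(2) by blast
  ultimately show ?thesis
    using r1(3) r2(2) by (auto simp: lang_def)
qed

lemma card_fooling_set_le_card_states:
  assumes wf: "wf_pa \<Sigma> A" and det: "deterministic \<Sigma> A"
    and len: "\<And>u. u \<in> S \<Longrightarrow> length u = m"
    and continuable: "\<And>u. u \<in> S \<Longrightarrow> \<exists>x. u \<frown> x \<in> lang \<Sigma> A"
    and sep: "\<And>u v. u \<in> S \<Longrightarrow> v \<in> S \<Longrightarrow> u \<noteq> v \<Longrightarrow>
        \<exists>x. (u \<frown> x \<in> lang \<Sigma> A) \<noteq> (v \<frown> x \<in> lang \<Sigma> A)"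
  shows "card S \<le> card (states A)"
proof -
  have "\<forall>u\<in>S. \<exists>x r. is_run A (u \<frown> x) r \<and> (\<forall>i. (u \<frown> x) i \<in> \<Sigma>)"
    using continuable by (fastforce simp: lang_def)
  then obtain x r where run: "\<And>u. u \<in> S \<Longrightarrow> is_run A (u \<frown> x u) (r u)"
    and letters: "\<And>u. u \<in> S \<Longrightarrow> \<forall>i. (u \<frown> x u) i \<in> \<Sigma>"
    by metis
  define after where "after u = r u m" for u
  \<comment> \<open>By determinism every run on a word with prefix u is in state after u at time m,
    so an accepting run on u z can be spliced at time m onto the run on v x v.\<close>
  have transfer: "v \<frown> z \<in> lang \<Sigma> A"
    if u: "u \<in> S" and v: "v \<in> S" and "after u = after v" and uz: "u \<frown> z \<in> lang \<Sigma> A"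
    for u v z
  proof -
    obtain r' where r': "is_run A (u \<frown> z) r'" "accepting A r'" "\<forall>i. (u \<frown> z) i \<in> \<Sigma>"
      using uz by (auto simp: lang_def)
    have "\<forall>i<m. (u \<frown> z) i = (u \<frown> x u) i"
      using len[OF u] by simp
    then have "r' m = r u m"
      using deterministic_runs_agree[OF wf det r'(3) r'(1) run[OF u]] by blast
    then have "r' m = r v m"
      using \<open>after u = after v\<close> by (simp add: after_def)
    then have "(\<lambda>t. if t < m then (v \<frown> x v) t else (u \<frown> z) t) \<in> lang \<Sigma> A"
      using splice_in_lang[OF r' run[OF v]] letters[OF v] by blast
    moreover have "(\<lambda>t. if t < m then (v \<frown> x v) t else (u \<frown> z) t) = v \<frown> z"
      by (rule ext) (simp add: conc_def len[OF u] len[OF v])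
    ultimately show ?thesis by simp
  qed
  have "inj_on after S"
  proof (rule inj_onI, rule ccontr)
    fix u v assume "u \<in> S" "v \<in> S" "after u = after v" "u \<noteq> v"
    moreover obtain z where "(u \<frown> z \<in> lang \<Sigma> A) \<noteq> (v \<frown> z \<in> lang \<Sigma> A)"
      using sep \<open>u \<in> S\<close> \<open>v \<in> S\<close> \<open>u \<noteq> v\<close> by blast
    ultimately show False
      using transfer[of u v z] transfer[of v u z] by argo
  qed
  moreover have "after ` S \<subseteq> states A"
    using run_in_states[OF wf letters run] by (auto simp: after_def)
  ultimately show ?thesis
    using card_inj_on_le wf by (auto simp: wf_pa_def)
qed

lemma eventually_constant_in_lasso_lang:
  assumes "w \<in> \<psi>" "\<forall>i. w i \<in> \<Sigma>" "\<forall>t\<ge>m. w t = a" "m < n"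
  shows "w \<in> lasso_lang \<Sigma> n \<psi>"
proof -
  have "w = prefix (n - 1) w \<frown> [a]\<^sup>\<omega>"
    using assms(3,4) by (auto simp: conc_def)
  moreover have "a \<in> \<Sigma>" using assms(2,3) by auto
  ultimately show ?thesis
    unfolding lasso_lang_def using assms(1,2,4)
    by (intro CollectI conjI exI[of _ "prefix (n - 1) w"] exI[of _ "[a]"]) auto
qed

text \<open>State 0 waits and may guess a 1; state q with 1 \<le> q \<le> k has read that 1 exactly q letters
  ago; state k+1 is the accepting sink. The states k+2, ..., 2k+1 are unreachable: they only make
  every n \<ge> |A| exceed the length 2k+1 of the non-periodic part of the fooling words.
  The construction is meant for k \<ge> 1; for k = 0 the bound 2^0 is trivial.\<close>

definition gap_aut :: "nat \<Rightarrow> (nat, nat) pa" where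
  "gap_aut k = \<lparr>states = {0..<2 * k + 2}, init = {0},
     trans = (\<lambda>q a. if q = 0 then (if a = 1 then {0, 1} else {0})
                 else if q < k then {Suc q}
                 else if q = k then (if a = 2 then {Suc k} else {})
                 else if q = Suc k then {Suc k} else {}),
     col = (\<lambda>q. if q = Suc k then 0 else 1)\<rparr>"

lemma wf_gap_aut: "wf_pa {0, 1, 2} (gap_aut k)"
  unfolding wf_pa_def gap_aut_def by auto

lemma card_states_gap_aut: "card (states (gap_aut k)) = 2 * k + 2"
  by (simp add: gap_aut_def)

lemma gap_aut_run_counts:
  assumes "1 \<le> k" and run: "is_run (gap_aut k) w r"
  shows "1 \<le> q \<Longrightarrow> q \<le> k \<Longrightarrow> r t = q \<Longrightarrow> q \<le> t \<and> w (t - q) = 1"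
proof (induction q arbitrary: t)
  case 0
  then show ?case by simp
next
  case (Suc q)
  have "r 0 = 0"
    using run by (simp add: is_run_def gap_aut_def)
  with Suc.prems obtain s where t: "t = Suc s"
    by (cases t) auto
  have step: "r t \<in> trans (gap_aut k) (r s) (w s)"
    using run t by (simp add: is_run_def)
  show ?case
  proof (cases q)
    case 0
    then have "r s = 0 \<and> w s = 1"
      using step Suc.prems assms(1) by (auto simp: gap_aut_def split: if_splits)
    then show ?thesis using t 0 by simp
  next
    case (Suc q')
    then have "r s = q"
      using step Suc.prems assms(1) by (auto simp: gap_aut_def split: if_splits)
    then have "q \<le> s \<and> w (s - q) = 1"
      using Suc.IH Suc.prems \<open>q = Suc q'\<close> by auto
    then show ?thesis using t by simp
  qed
qed

lemma gap_aut_run_reaches_sink: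
  assumes "1 \<le> k" and run: "is_run (gap_aut k) w r"
  shows "r t = Suc k \<Longrightarrow> \<exists>i. w i = 1 \<and> w (i + k) = 2"
proof (induction t)
  case 0
  then show ?case using run by (simp add: is_run_def gap_aut_def)
next
  case (Suc s)
  show ?case
  proof (cases "r s = Suc k")
    case True
    then show ?thesis using Suc.IH by simp
  next
    case False
    have "r (Suc s) \<in> trans (gap_aut k) (r s) (w s)"
      using run by (simp add: is_run_def)
    then have "r s = k" "w s = 2"
      using False Suc.prems assms(1) by (auto simp: gap_aut_def split: if_splits)
    moreover have "k \<le> s \<and> w (s - k) = 1"
      using gap_aut_run_counts[OF assms, of k s] assms(1) \<open>r s = k\<close> by auto
    ultimately show ?thesis
      by (intro exI[of _ "s - k"]) auto
  qed
qed

lemma lang_gap_aut: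
  assumes "1 \<le> k"
  shows "lang {0, 1, 2} (gap_aut k) = {w. (\<forall>i. w i \<in> {0, 1, 2}) \<and> (\<exists>i. w i = 1 \<and> w (i + k) = 2)}"
proof (intro set_eqI iffI)
  fix w :: "nat word"
  assume "w \<in> lang {0, 1, 2} (gap_aut k)"
  then obtain r where letters: "\<forall>i. w i \<in> {0, 1, 2}" and run: "is_run (gap_aut k) w r"
    and acc: "accepting (gap_aut k) r"
    by (auto simp: lang_def)
  have "\<exists>t. r t = Suc k"
  proof (rule ccontr)
    assume "\<nexists>t. r t = Suc k"
    then have colours: "range (col (gap_aut k) \<circ> r) = {1}"
      by (auto simp: gap_aut_def)
    then have "limit (col (gap_aut k) \<circ> r) \<subseteq> {1}"
      using limit_in_range[of "col (gap_aut k) \<circ> r"] by simp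
    moreover obtain c where "c \<in> limit (col (gap_aut k) \<circ> r)"
      using limit_nonempty[of "col (gap_aut k) \<circ> r"] colours by auto
    ultimately have "limit (col (gap_aut k) \<circ> r) = {1}"
      by blast
    then show False
      using acc by (simp add: accepting_iff_limit)
  qed
  then show "w \<in> {w. (\<forall>i. w i \<in> {0, 1, 2}) \<and> (\<exists>i. w i = 1 \<and> w (i + k) = 2)}"
    using gap_aut_run_reaches_sink[OF assms run] letters by auto
next
  fix w :: "nat word"
  assume "w \<in> {w. (\<forall>i. w i \<in> {0, 1, 2}) \<and> (\<exists>i. w i = 1 \<and> w (i + k) = 2)}"
  then obtain i where letters: "\<forall>i. w i \<in> {0, 1, 2}" and i: "w i = 1" "w (i + k) = 2"
    by auto
  define r where "r t = (if t \<le> i then 0 else if t \<le> i + k then t - i else Suc k)" for t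
  have "is_run (gap_aut k) w r"
    unfolding is_run_def
  proof (intro conjI allI)
    show "r 0 \<in> init (gap_aut k)"
      by (simp add: r_def gap_aut_def)
  next
    fix t
    consider "t < i" | "t = i" | "i < t \<and> t < i + k" | "t = i + k" | "i + k < t"
      by linarith
    then show "r (Suc t) \<in> trans (gap_aut k) (r t) (w t)"
      by cases (use i assms in \<open>auto simp: r_def gap_aut_def\<close>)
  qed
  moreover have "accepting (gap_aut k) r"
  proof -
    have "suffix (Suc (i + k)) r = suffix (Suc (i + k)) (\<lambda>_. Suc k)"
      by (simp add: suffix_def r_def)
    moreover have "accepting (gap_aut k) (\<lambda>_. Suc k)"
      by (simp add: accepting_iff_limit limit_def gap_aut_def comp_def)
    ultimately show ?thesis
      using accepting_suffix_cong by blast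
  qed
  ultimately show "w \<in> lang {0, 1, 2} (gap_aut k)"
    using letters by (auto simp: lang_def)
qed

definition two_at :: "nat \<Rightarrow> nat word" where
  "two_at j = (\<lambda>t. if t = j then 2 else 0)"

lemma conc_two_at_letters: "set u \<subseteq> \<Sigma> \<Longrightarrow> {0, 2} \<subseteq> \<Sigma> \<Longrightarrow> (u \<frown> two_at j) i \<in> \<Sigma>"
  by (cases "i < length u") (auto simp: two_at_def)

lemma conc_two_at_eventually_zero: "length u + j < t \<Longrightarrow> (u \<frown> two_at j) t = 0"
  by (simp add: two_at_def)

lemma conc_two_at_in_lang_gap_aut_iff:
  assumes xs: "set xs \<subseteq> {0, 1}" "length xs = k" and "j < k"
  shows "xs \<frown> two_at j \<in> lang {0, 1, 2} (gap_aut k) \<longleftrightarrow> xs ! j = 1"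
proof -
  have two_iff: "(xs \<frown> two_at j) (i + k) = 2 \<longleftrightarrow> i = j" for i
    using xs by (simp add: two_at_def)
  have "(\<exists>i. (xs \<frown> two_at j) i = 1 \<and> (xs \<frown> two_at j) (i + k) = 2) \<longleftrightarrow>
      (xs \<frown> two_at j) j = 1"
    by (simp only: two_iff) blast
  also have "\<dots> \<longleftrightarrow> xs ! j = 1"
    using xs \<open>j < k\<close> by simp
  moreover have "\<forall>i. (xs \<frown> two_at j) i \<in> {0, 1, 2}"
    by (intro allI conc_two_at_letters) (use xs in auto)
  moreover have "1 \<le> k"
    using \<open>j < k\<close> by simp
  ultimately show ?thesis
    unfolding lang_gap_aut[OF \<open>1 \<le> k\<close>] by blast
qed

lemma conc_one_two_at_in_lang_gap_aut:
  assumes "1 \<le> k" "set xs \<subseteq> {0, 1}" "length xs = k"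
  shows "(xs @ [1]) \<frown> two_at (k - 1) \<in> lang {0, 1, 2} (gap_aut k)"
proof -
  have "((xs @ [1]) \<frown> two_at (k - 1)) k = 1" "((xs @ [1]) \<frown> two_at (k - 1)) (k + k) = 2"
    using assms by (simp_all add: conc_def two_at_def nth_append)
  moreover have "\<forall>i. ((xs @ [1]) \<frown> two_at (k - 1)) i \<in> {0, 1, 2}"
    by (intro allI conc_two_at_letters) (use assms in auto)
  ultimately show ?thesis
    unfolding lang_gap_aut[OF assms(1)] by blast
qed

lemma gap_aut_fooling_bound:
  assumes "1 \<le> k" and n: "2 * k + 2 \<le> n"
    and wf: "wf_pa {0, 1, 2} B" and det: "deterministic {0, 1, 2} B"
    and sub: "lang {0, 1, 2} B \<subseteq> lang {0, 1, 2} (gap_aut k)"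
    and lassos: "lasso_lang {0, 1, 2} n (lang {0, 1, 2} B) = lasso_lang {0, 1, 2} n (lang {0, 1, 2} (gap_aut k))"
  shows "2 ^ k \<le> card (states B)"
proof -
  let ?S = "{xs. set xs \<subseteq> {0, 1::nat} \<and> length xs = k}"
  have short_accepted: "u \<frown> two_at j \<in> lang {0, 1, 2} B"
    if "u \<frown> two_at j \<in> lang {0, 1, 2} (gap_aut k)" "length u + j \<le> 2 * k" for u j
  proof -
    have "u \<frown> two_at j \<in> lasso_lang {0, 1, 2} n (lang {0, 1, 2} (gap_aut k))"
      using that n conc_two_at_eventually_zero
      by (intro eventually_constant_in_lasso_lang[where m = "Suc (length u + j)" and a = 0])
        (auto simp: lang_def)
    then have "u \<frown> two_at j \<in> lasso_lang {0, 1, 2} n (lang {0, 1, 2} B)"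
      using lassos by simp
    then show ?thesis
      by (simp add: lasso_lang_def)
  qed
  have "card ?S \<le> card (states B)"
  proof (rule card_fooling_set_le_card_states[OF wf det])
    fix xs assume "xs \<in> ?S"
    then show "length xs = k" by simp
    have "(xs @ [1]) \<frown> two_at (k - 1) \<in> lang {0, 1, 2} B"
      using \<open>xs \<in> ?S\<close> conc_one_two_at_in_lang_gap_aut[OF \<open>1 \<le> k\<close>] \<open>1 \<le> k\<close>
      by (intro short_accepted) auto
    then show "\<exists>x. xs \<frown> x \<in> lang {0, 1, 2} B"
      by (metis conc_conc)
  next
    fix xs ys assume xs: "xs \<in> ?S" and ys: "ys \<in> ?S" and "xs \<noteq> ys"
    then obtain j where j: "j < k" "xs ! j \<noteq> ys ! j"
      using nth_equalityI[of xs ys] by auto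
    have accepted_iff: "zs \<frown> two_at j \<in> lang {0, 1, 2} B \<longleftrightarrow> zs ! j = 1" if zs: "zs \<in> ?S" for zs
    proof
      assume "zs \<frown> two_at j \<in> lang {0, 1, 2} B"
      then have "zs \<frown> two_at j \<in> lang {0, 1, 2} (gap_aut k)"
        using sub by blast
      then show "zs ! j = 1"
        using conc_two_at_in_lang_gap_aut_iff[of zs k j] zs j(1) by simp
    next
      assume "zs ! j = 1"
      then have "zs \<frown> two_at j \<in> lang {0, 1, 2} (gap_aut k)"
        using conc_two_at_in_lang_gap_aut_iff[of zs k j] zs j(1) by simp
      then show "zs \<frown> two_at j \<in> lang {0, 1, 2} B"
        using short_accepted zs j(1) by simp
    qed
    have "xs ! j \<in> set xs" "ys ! j \<in> set ys"
      using xs ys j(1) by simp_all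
    then have "xs ! j \<in> {0, 1}" "ys ! j \<in> {0, 1}"
      using xs ys by blast+
    then have "(xs ! j = 1) \<noteq> (ys ! j = 1)"
      using j(2) by auto
    then show "\<exists>x. (xs \<frown> x \<in> lang {0, 1, 2} B) \<noteq> (ys \<frown> x \<in> lang {0, 1, 2} B)"
      using accepted_iff[OF xs] accepted_iff[OF ys] by blast
  qed
  moreover have "card ?S = 2 ^ k"
    using card_lists_length_eq[of "{0, 1::nat}" k] by (simp add: numeral_2_eq_2)
  ultimately show ?thesis by simp
qed

lemma card_states_ge_if_lasso_equivalent_to_gap_aut:
  assumes "card (states (gap_aut k)) \<le> n"
    and "wf_pa {0, 1, 2} B" "deterministic {0, 1, 2} B"
    and "lang {0, 1, 2} B \<subseteq> lang {0, 1, 2} (gap_aut k)"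
    and "lasso_lang {0, 1, 2} n (lang {0, 1, 2} B) = lasso_lang {0, 1, 2} n (lang {0, 1, 2} (gap_aut k))"
  shows "2 ^ k \<le> card (states B)"
proof (cases "k = 0")
  case True
  then show ?thesis
    using deterministic_states_nonempty assms(2,3) by (simp add: Suc_le_eq)
next
  case False
  then have "1 \<le> k" by simp
  then show ?thesis
    using gap_aut_fooling_bound assms by (simp add: card_states_gap_aut)
qed

theorem theorem7:
  "\<exists>c::nat. \<forall>k::nat. \<exists>(\<Sigma>::nat set) (A::(nat, nat) pa).
     finite \<Sigma> \<and> \<Sigma> \<noteq> {} \<and> wf_pa \<Sigma> A \<and> card (states A) \<le> c * k + c \<and>
     (\<forall>n \<ge> card (states A). \<forall>A'::(nat, nat) pa.
        wf_pa \<Sigma> A' \<and> deterministic \<Sigma> A' \<and> lang \<Sigma> A' \<subseteq> lang \<Sigma> A \<and>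
        lasso_lang \<Sigma> n (lang \<Sigma> A') = lasso_lang \<Sigma> n (lang \<Sigma> A)
        \<longrightarrow> 2 ^ k \<le> card (states A'))"
proof (intro exI[of _ 2] allI, goal_cases)
  case (1 k)
  show ?case
  proof (intro exI[of _ "{0, 1, 2}"] exI[of _ "gap_aut k"] conjI allI impI)
    show "wf_pa {0, 1, 2} (gap_aut k)"
      by (rule wf_gap_aut)
    show "card (states (gap_aut k)) \<le> 2 * k + 2"
      by (simp add: card_states_gap_aut)
  qed (use card_states_ge_if_lasso_equivalent_to_gap_aut in blast)+
qed

end
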